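(* Let $f,\rho\in\mathcal{C}^1(SE(2))$ be supported in $\mathbb{D}_{1/4}^\circ$, with $\rho$ radial in translations. Then there is a constant $C>0$ (depending only on $f$ and $\rho$) such that for all $\mathbf{K}\in\mathbb{N}^3$, with $\mathbf{L}:=2\mathbf{K}+1$, and all $\mathbf{k}\in\mathbb{Z}^3$ with $|\mathbf{k}|\le\mathbf{K}$, \[ \left|\widehat{f\star\rho}[\mathbf{k};\mathbf{L}]-\widehat{f}[\mathbf{k};\mathbf{L}]\,\widehat{\rho}[\mathbf{k};\mathbf{L}]\right|\le\frac{C}{\min(\mathbf{K})}. \] In particular, for $K\in\mathbb{N}$ and $\|\mathbf{k}\|_\infty\le K$, $\left|\widehat{f\star\rho}[\mathbf{k};2K+1]-\widehat{f}[\mathbf{k};2K+1]\widehat{\rho}[\mathbf{k};2K+1]\right|\le C/K$.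
   Context: $SE(2)=\mathbb{R}^2\rtimes SO(2)$ with group law $(\mathbf{x},\mathbf{R})\circ(\mathbf{x}',\mathbf{R}')=(\mathbf{x}+\mathbf{R}\mathbf{x}',\mathbf{R}\mathbf{R}')$, elements parametrized by $(x,y,\theta)\in\mathbb{R}^2\times[0,2\pi)$, Haar measure $\frac{1}{2\pi}\mathrm{d}x\,\mathrm{d}y\,\mathrm{d}\theta$; convolution $(f_1\star f_2)(\mathbf{h})=\int_{SE(2)}f_1(\mathbf{g})f_2(\mathbf{g}^{-1}\circ\mathbf{h})\,\mathrm{d}\mathbf{g}$. $\mathcal{C}^1(SE(2))$: continuously differentiable in $(x,y,\theta)$, $2\pi$-periodic in $\theta$. $\mathbb{D}_a^\circ=\{(\mathbf{x},\mathbf{R}):\|\mathbf{x}\|_2<a\}$. $\rho$ radial in translations: $\rho(\mathbf{x},\mathbf{R})=\rho(\mathbf{S}\mathbf{x},\mathbf{R})$ for all $\mathbf{x}\in\mathbb{R}^2$, $\mathbf{R},\mathbf{S}\in SO(2)$. For $\mathbf{k}\in\mathbb{Z}^3$, $\phi_{\mathbf{k}}(x,y,\theta)=e^{2\pi\mathrm{i}(k_1x+k_2y)}e^{\mathrm{i}k_3\theta}$. For $\mathbf{L}=(L_{\mathrm x},L_{\mathrm y},L_{\mathrm r})\in\mathbb{N}^3$, grid points $x_i=-\tfrac12+\tfrac{i-1}{L_{\mathrm x}}$, $y_j=-\tfrac12+\tfrac{j-1}{L_{\mathrm y}}$, $\theta_l=\tfrac{2\pi(l-1)}{L_{\mathrm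 r}}$, and for a function $g$ on $SE(2)$, $\widehat{g}[\mathbf{k};\mathbf{L}]=\frac{1}{L_{\mathrm x}L_{\mathrm y}L_{\mathrm r}}\sum_{i,j,l}g(x_i,y_j,\theta_l)\overline{\phi_{\mathbf{k}}(x_i,y_j,\theta_l)}$ (scalar $L$ means $(L,L,L)$). For $\mathbf{K}\in\mathbb{N}^3$: $2\mathbf{K}+1$ componentwise, $\min(\mathbf{K})$ smallest entry, $|\mathbf{k}|\le\mathbf{K}$ componentwise. *)

theory Defs
  imports "HOL-Analysis.Analysis"
begin

text \<open>Functions on SE(2) are represented in the coordinates (x, y, theta) as maps
  real \<times> real \<times> real \<Rightarrow> real.\<close>

type_synonym se2fun = "real \<times> real \<times> real \<Rightarrow> real"

definition C1_SE2 :: "se2fun \<Rightarrow> bool" where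
  "C1_SE2 f \<longleftrightarrow>
     (\<exists>D :: real \<times> real \<times> real \<Rightarrow> ((real \<times> real \<times> real) \<Rightarrow>\<^sub>L real).
        (\<forall>p. (f has_derivative blinfun_apply (D p)) (at p)) \<and> continuous_on UNIV D)
     \<and> (\<forall>x y t. f (x, y, t + 2 * pi) = f (x, y, t))"

definition supported_in_disc :: "real \<Rightarrow> se2fun \<Rightarrow> bool" where
  "supported_in_disc a f \<longleftrightarrow>
     closure {p. f p \<noteq> 0} \<subseteq> {(x, y, t). sqrt (x\<^sup>2 + y\<^sup>2) < a}"

definition radial_in_translations :: "se2fun \<Rightarrow> bool" where
  "radial_in_translations \<rho> \<longleftrightarrow>
     (\<forall>x y t \<phi>. \<rho> (cos \<phi> * x - sin \<phi> * y, sin \<phi> * x + cos \<phi> * y, t) = \<rho> (x, y, t))"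

text \<open>Convolution with respect to the Haar measure (1/2pi) dx dy dtheta:
  for g = (x, R_t), h = (a, R_s) one has g^{-1} h = (R_t^{-1}(a - x), R_{s - t}).\<close>
definition se2_conv :: "se2fun \<Rightarrow> se2fun \<Rightarrow> se2fun" where
  "se2_conv f1 f2 = (\<lambda>(a, b, s).
     (1 / (2 * pi)) * integral (UNIV \<times> UNIV \<times> {0..2 * pi})
       (\<lambda>(x, y, t). f1 (x, y, t) *
          f2 (cos t * (a - x) + sin t * (b - y), - sin t * (a - x) + cos t * (b - y), s - t)))"

definition phi_k :: "int \<Rightarrow> int \<Rightarrow> int \<Rightarrow> real \<Rightarrow> real \<Rightarrow> real \<Rightarrow> complex" where
  "phi_k k1 k2 k3 x y t =
     exp (2 * pi * \<i> * of_real (of_int k1 * x + of_int k2 * y)) * exp (\<i> * of_real (of_int k3 * t))"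

text \<open>Discrete Fourier coefficient on the grid; indices i = 0..<Lx correspond to the paper's
  i = 1..Lx, i.e. x_i = -1/2 + i/Lx etc.\<close>
definition dft_coeff :: "se2fun \<Rightarrow> int \<Rightarrow> int \<Rightarrow> int \<Rightarrow> nat \<Rightarrow> nat \<Rightarrow> nat \<Rightarrow> complex" where
  "dft_coeff g k1 k2 k3 Lx Ly Lr =
     (1 / of_nat (Lx * Ly * Lr)) *
     (\<Sum>i<Lx. \<Sum>j<Ly. \<Sum>l<Lr.
        let x = - 1 / 2 + real i / real Lx;
            y = - 1 / 2 + real j / real Ly;
            t = 2 * pi * real l / real Lr
        in of_real (g (x, y, t)) * cnj (phi_k k1 k2 k3 x y t))"

end

theory Submission
  imports Defs "HOL-Library.Periodic_Fun"
begin

text \<open>Since \<open>\<rho>\<close> is radial in translations, the rotation in \<open>g\<^sup>-\<^sup>1 \<circ> h\<close> drops out and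
  \<open>f \<star> \<rho>\<close> is an ordinary convolution over \<open>\<real>\<^sup>2 \<times> [0, 2\<pi>)\<close>. Sampling this integral on the
  DFT grid gives a discrete convolution up to an error \<open>O(1/L)\<close>, because \<open>C\<^sup>1\<close> functions with
  compact support are Lipschitz. For the discrete convolution the convolution theorem is exact: both
  supports lie in the disc of radius \<open>1/4\<close>, so the differences of grid points that matter never
  wrap around in \<open>x\<close> or \<open>y\<close>, and \<open>\<theta>\<close> is periodic anyway. What it produces, however, is the
  sum of \<open>\<rho>\<close> over the centred lattice \<open>\<int>\<^sup>3/L\<close>, whereas the DFT of \<open>\<rho>\<close> samples the grid,
  which is offset from that lattice by half a cell in \<open>x\<close> and \<open>y\<close>. The offset costs a phase error
  of size \<open>O(|k|/L)\<close> times the lattice sum, and the lattice sum is \<open>O(1/|k|)\<close>: translating it by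
  one cell leaves it unchanged but multiplies it by the phase \<open>exp (2\<pi>ik/L)\<close>, up to an \<open>O(1/L)\<close>
  Lipschitz error.\<close>

section \<open>Riemann sums of Lipschitz functions\<close>

lemma lipschitz_on_mult_bounded:
  fixes f g :: "'a::metric_space \<Rightarrow> real"
  assumes "L-lipschitz_on S f" "L'-lipschitz_on S g"
    and "\<And>x. x \<in> S \<Longrightarrow> \<bar>f x\<bar> \<le> M" "\<And>x. x \<in> S \<Longrightarrow> \<bar>g x\<bar> \<le> M'"
    and "0 \<le> M" "0 \<le> M'"
  shows "(M' * L + M * L')-lipschitz_on S (\<lambda>x. f x * g x)"
proof (rule lipschitz_onI)
  fix x y assume xy: "x \<in> S" "y \<in> S"
  have "f x * g x - f y * g y = (f x - f y) * g x + f y * (g x - g y)"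
    by (simp add: algebra_simps)
  then have "dist (f x * g x) (f y * g y) \<le> \<bar>f x - f y\<bar> * \<bar>g x\<bar> + \<bar>f y\<bar> * \<bar>g x - g y\<bar>"
    by (simp add: dist_real_def) (metis abs_mult abs_triangle_ineq)
  also have "\<dots> \<le> (L * dist x y) * M' + M * (L' * dist x y)"
    using assms xy lipschitz_onD[OF assms(1) xy] lipschitz_onD[OF assms(2) xy]
    by (intro add_mono mult_mono) (auto simp: dist_real_def intro: order_trans[OF abs_ge_zero])
  finally show "dist (f x * g x) (f y * g y) \<le> (M' * L + M * L') * dist x y"
    by (simp add: algebra_simps)
next
  show "0 \<le> M' * L + M * L'"
    using assms lipschitz_on_nonneg[OF assms(1)] lipschitz_on_nonneg[OF assms(2)] by simp
qed

lemma lipschitz_on_Pair_fst: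
  assumes "L-lipschitz_on UNIV g"
  shows "L-lipschitz_on UNIV (\<lambda>x. g (x, y))"
proof (rule lipschitz_onI)
  fix x x'
  show "dist (g (x, y)) (g (x', y)) \<le> L * dist x x'"
    using lipschitz_onD[OF assms, of "(x, y)" "(x', y)"] by (simp add: dist_Pair_Pair)
qed (rule lipschitz_on_nonneg[OF assms])

lemma lipschitz_on_Pair_snd:
  assumes "L-lipschitz_on UNIV g"
  shows "L-lipschitz_on UNIV (\<lambda>y. g (x, y))"
proof (rule lipschitz_onI)
  fix y y'
  show "dist (g (x, y)) (g (x, y')) \<le> L * dist y y'"
    using lipschitz_onD[OF assms, of "(x, y)" "(x, y')"] by (simp add: dist_Pair_Pair)
qed (rule lipschitz_on_nonneg[OF assms])

lemma sum_abs_diff_le_card: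
  fixes u v :: "'i \<Rightarrow> real"
  assumes "\<And>i. i \<in> I \<Longrightarrow> \<bar>u i - v i\<bar> \<le> e"
  shows "\<bar>sum u I - sum v I\<bar> \<le> real (card I) * e"
proof -
  have "\<bar>sum u I - sum v I\<bar> \<le> (\<Sum>i\<in>I. \<bar>u i - v i\<bar>)"
    unfolding sum_subtractf[symmetric] by (rule sum_abs)
  also have "\<dots> \<le> real (card I) * e"
    using assms by (rule sum_bounded_above)
  finally show ?thesis .
qed

lemma riemann_sum_lipschitz_error:
  fixes u :: "real \<Rightarrow> real"
  assumes lip: "\<Lambda>-lipschitz_on {a..a + real n * h} u" and h: "h > 0"
  shows "\<bar>integral {a..a + real n * h} u - h * (\<Sum>i<n. u (a + real i * h))\<bar> \<le> real n * h * (\<Lambda> * h)"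
  using lip
proof (induction n)
  case (Suc n)
  let ?c = "a + real n * h"
  have split: "a + real (Suc n) * h = ?c + h"
    by (simp add: algebra_simps)
  have "a \<le> ?c"
    using h by simp
  have lip_n: "\<Lambda>-lipschitz_on {a..?c} u"
    by (rule lipschitz_on_subset[OF Suc.prems[unfolded split]]) (use h in auto)
  have lip_cell: "\<Lambda>-lipschitz_on {?c..?c + h} u"
    by (rule lipschitz_on_subset[OF Suc.prems[unfolded split]]) (auto intro: order_trans[OF \<open>a \<le> ?c\<close>])
  have cont: "continuous_on {a..?c + h} u"
    using Suc.prems unfolding split by (rule lipschitz_on_continuous_on)
  have "integral {?c..?c + h} u - h * u ?c = integral {?c..?c + h} (\<lambda>s. u s - u ?c)"
    using h by (subst integral_diff) (auto intro!: integrable_continuous_real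
        continuous_on_subset[OF cont] intro: order_trans[OF \<open>a \<le> ?c\<close>])
  also have "\<bar>\<dots>\<bar> \<le> (\<Lambda> * h) * ((?c + h) - ?c)"
    unfolding real_norm_def[symmetric]
  proof (rule integral_bound)
    show "continuous_on {?c..?c + h} (\<lambda>s. u s - u ?c)"
      by (intro continuous_intros continuous_on_subset[OF cont]) auto
    fix s assume "s \<in> {?c..?c + h}"
    then show "norm (u s - u ?c) \<le> \<Lambda> * h"
      using lipschitz_onD[OF lip_cell, of s ?c] lipschitz_on_nonneg[OF lip_cell]
        mult_left_mono[of "s - ?c" h \<Lambda>]
      by (auto simp: dist_real_def)
  qed (use h in simp)
  finally have cell: "\<bar>integral {?c..?c + h} u - h * u ?c\<bar> \<le> \<Lambda> * h * h"
    by simp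
  have "integral {a..?c + h} u = integral {a..?c} u + integral {?c..?c + h} u"
    using h \<open>a \<le> ?c\<close>
    by (intro Henstock_Kurzweil_Integration.integral_combine[symmetric] integrable_continuous_real cont)
      auto
  then show ?case
    using Suc.IH[OF lip_n] cell unfolding split by (simp add: algebra_simps)
qed simp

lemma riemann_sum_prod_error:
  fixes g :: "real \<times> 'b::euclidean_space \<Rightarrow> real" and Q :: "('b \<Rightarrow> real) \<Rightarrow> real"
  assumes cont: "continuous_on UNIV g"
    and lip: "\<And>y. \<Lambda>-lipschitz_on UNIV (\<lambda>x. g (x, y))"
    and inner: "\<And>x. \<bar>integral (cbox c d) (\<lambda>y. g (x, y)) - Q (\<lambda>y. g (x, y))\<bar> \<le> e"
    and h: "h > 0"
  shows "\<bar>integral (cbox (a, c) (a + real n * h, d)) g - h * (\<Sum>i<n. Q (\<lambda>y. g (a + real i * h, y)))\<bar>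
    \<le> real n * h * (e + measure lborel (cbox c d) * \<Lambda> * h)"
proof -
  define G where "G x = integral (cbox c d) (\<lambda>y. g (x, y))" for x
  have cont_y: "continuous_on (cbox c d) (\<lambda>y. g (x, y))" for x
    by (rule continuous_on_compose2[OF cont continuous_on_Pair[OF continuous_on_const continuous_on_id]]) auto
  have "\<Lambda> \<ge> 0"
    using lipschitz_on_nonneg[OF lip] .
  have "(measure lborel (cbox c d) * \<Lambda>)-lipschitz_on UNIV G"
  proof (rule lipschitz_onI)
    fix x x'
    have "G x - G x' = integral (cbox c d) (\<lambda>y. g (x, y) - g (x', y))"
      by (simp add: G_def integral_diff integrable_continuous cont_y)
    also have "norm \<dots> \<le> \<Lambda> * dist x x' * measure lborel (cbox c d)"
    proof (rule has_integral_bound[OF _ integrable_integral])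
      show "0 \<le> \<Lambda> * dist x x'"
        using \<open>\<Lambda> \<ge> 0\<close> by simp
      show "(\<lambda>y. g (x, y) - g (x', y)) integrable_on cbox c d"
        by (intro integrable_diff integrable_continuous cont_y)
      fix y
      show "norm (g (x, y) - g (x', y)) \<le> \<Lambda> * dist x x'"
        using lipschitz_onD[OF lip, of x x'] by (simp add: dist_real_def)
    qed
    finally show "dist (G x) (G x') \<le> measure lborel (cbox c d) * \<Lambda> * dist x x'"
      by (simp add: dist_real_def mult_ac)
  qed (use \<open>\<Lambda> \<ge> 0\<close> in simp)
  then have outer: "\<bar>integral {a..a + real n * h} G - h * (\<Sum>i<n. G (a + real i * h))\<bar>
      \<le> real n * h * (measure lborel (cbox c d) * \<Lambda> * h)"
    by (rule riemann_sum_lipschitz_error[OF lipschitz_on_subset[OF _ subset_UNIV] h])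
  have fubini: "integral (cbox (a, c) (a + real n * h, d)) g = integral {a..a + real n * h} G"
    unfolding G_def by (simp add: integral_prod_continuous[OF continuous_on_subset[OF cont]] cbox_interval)
  have "\<bar>(\<Sum>i<n. G (a + real i * h)) - (\<Sum>i<n. Q (\<lambda>y. g (a + real i * h, y)))\<bar> \<le> real n * e"
    using sum_abs_diff_le_card[of "{..<n}"] inner unfolding G_def by simp
  then have "\<bar>h * (\<Sum>i<n. G (a + real i * h)) - h * (\<Sum>i<n. Q (\<lambda>y. g (a + real i * h, y)))\<bar>
      \<le> h * (real n * e)"
    using h by (simp add: abs_mult flip: right_diff_distrib)
  with outer show ?thesis
    unfolding fubini by (simp add: algebra_simps)
qed

lemma riemann_sum3_lipschitz_error:
  fixes g :: "real \<times> real \<times> real \<Rightarrow> real"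
  assumes lip: "\<Lambda>-lipschitz_on UNIV g" and h: "h1 > 0" "h2 > 0" "h3 > 0"
  shows "\<bar>integral (cbox (a1, a2, a3) (a1 + real n1 * h1, a2 + real n2 * h2, a3 + real n3 * h3)) g
      - h1 * h2 * h3 * (\<Sum>i<n1. \<Sum>j<n2. \<Sum>l<n3. g (a1 + real i * h1, a2 + real j * h2, a3 + real l * h3))\<bar>
    \<le> real n1 * h1 * (real n2 * h2) * (real n3 * h3) * \<Lambda> * (h1 + h2 + h3)"
proof -
  have cont: "continuous_on UNIV g"
    using lip by (rule lipschitz_on_continuous_on)
  have line: "measure lborel (cbox a3 (a3 + real n3 * h3)) = real n3 * h3"
    using h by (simp add: cbox_interval content_real)
  have plane: "\<bar>integral (cbox (a2, a3) (a2 + real n2 * h2, a3 + real n3 * h3)) (\<lambda>yt. g (x, yt))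
      - h2 * (\<Sum>j<n2. h3 * (\<Sum>l<n3. g (x, a2 + real j * h2, a3 + real l * h3)))\<bar>
    \<le> real n2 * h2 * (real n3 * h3 * (\<Lambda> * h3) + measure lborel (cbox a3 (a3 + real n3 * h3)) * \<Lambda> * h2)"
    for x
  proof (rule riemann_sum_prod_error[OF _ _ _ h(2)])
    show "continuous_on UNIV (\<lambda>yt. g (x, yt))"
      by (rule continuous_on_compose2[OF cont continuous_on_Pair[OF continuous_on_const continuous_on_id]]) auto
    show "\<Lambda>-lipschitz_on UNIV (\<lambda>y. g (x, y, t))" for t
      by (rule lipschitz_on_Pair_fst[OF lipschitz_on_Pair_snd[OF lip]])
    show "\<bar>integral (cbox a3 (a3 + real n3 * h3)) (\<lambda>t. g (x, y, t))
        - h3 * (\<Sum>l<n3. g (x, y, a3 + real l * h3))\<bar> \<le> real n3 * h3 * (\<Lambda> * h3)" for y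
      unfolding cbox_interval
      by (rule riemann_sum_lipschitz_error[OF lipschitz_on_subset[OF _ subset_UNIV] h(3)])
        (rule lipschitz_on_Pair_snd[OF lipschitz_on_Pair_snd[OF lip]])
  qed
  have "\<bar>integral (cbox (a1, a2, a3) (a1 + real n1 * h1, a2 + real n2 * h2, a3 + real n3 * h3)) g
      - h1 * (\<Sum>i<n1. h2 * (\<Sum>j<n2. h3 * (\<Sum>l<n3. g (a1 + real i * h1, a2 + real j * h2, a3 + real l * h3))))\<bar>
    \<le> real n1 * h1 * (real n2 * h2 * (real n3 * h3 * (\<Lambda> * h3)
          + measure lborel (cbox a3 (a3 + real n3 * h3)) * \<Lambda> * h2)
        + measure lborel (cbox (a2, a3) (a2 + real n2 * h2, a3 + real n3 * h3)) * \<Lambda> * h1)"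
    by (rule riemann_sum_prod_error[OF cont lipschitz_on_Pair_fst[OF lip] plane h(1)])
  moreover have "measure lborel (cbox (a2, a3) (a2 + real n2 * h2, a3 + real n3 * h3))
      = real n2 * h2 * (real n3 * h3)"
    using h unfolding content_Pair by (simp add: cbox_interval content_real)
  ultimately show ?thesis
    unfolding line by (simp add: sum_distrib_left algebra_simps)
qed

section \<open>Compactly supported \<open>C\<^sup>1\<close> functions\<close>

lemma supported_in_disc_closure_coords:
  assumes "supported_in_disc r f" and "(x, y, t) \<in> closure {p. f p \<noteq> 0}"
  shows "\<bar>x\<bar> < r" and "\<bar>y\<bar> < r"
proof -
  have "sqrt (x\<^sup>2 + y\<^sup>2) < r"
    using assms unfolding supported_in_disc_def by blast
  moreover have "\<bar>x\<bar> \<le> sqrt (x\<^sup>2 + y\<^sup>2)" "\<bar>y\<bar> \<le> sqrt (x\<^sup>2 + y\<^sup>2)"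
    using real_sqrt_sum_squares_ge1[of "\<bar>x\<bar>" y] real_sqrt_sum_squares_ge2[of x "\<bar>y\<bar>"] by simp_all
  ultimately show "\<bar>x\<bar> < r" "\<bar>y\<bar> < r"
    by linarith+
qed

lemma supported_in_disc_coords:
  assumes "supported_in_disc r f" and "f (x, y, t) \<noteq> 0"
  shows "\<bar>x\<bar> < r" and "\<bar>y\<bar> < r"
proof -
  have "(x, y, t) \<in> closure {p. f p \<noteq> 0}"
    using assms(2) closure_subset[of "{p. f p \<noteq> 0}"] by auto
  from supported_in_disc_closure_coords[OF assms(1) this] show "\<bar>x\<bar> < r" "\<bar>y\<bar> < r" .
qed

lemma supported_in_disc_mono: "supported_in_disc r f \<Longrightarrow> r \<le> r' \<Longrightarrow> supported_in_disc r' f"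
  unfolding supported_in_disc_def by fastforce

lemma lipschitz_supported_in_disc_bound:
  assumes lip: "B-lipschitz_on UNIV f" and supp: "supported_in_disc r f" and "0 \<le> r"
  shows "\<bar>f p\<bar> \<le> 2 * r * B"
proof -
  obtain x y t where p: "p = (x, y, t)"
    by (cases p) auto
  have "B \<ge> 0"
    using lipschitz_on_nonneg[OF lip] .
  show ?thesis
  proof (cases "f p = 0")
    case False
    then have "\<bar>x\<bar> < r"
      using supported_in_disc_coords[OF supp] p by blast
    have "f (r, y, t) = 0"
      using supported_in_disc_coords(1)[OF supp, of r y t] by (metis abs_ge_self not_less)
    then have "\<bar>f p\<bar> \<le> B * \<bar>x - r\<bar>"
      using lipschitz_onD[OF lip, of p "(r, y, t)"] by (simp add: p dist_Pair_Pair dist_real_def)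
    also have "\<dots> \<le> B * (2 * r)"
      using \<open>\<bar>x\<bar> < r\<close> \<open>B \<ge> 0\<close> by (intro mult_left_mono) auto
    finally show ?thesis
      by (simp add: mult_ac)
  qed (use \<open>B \<ge> 0\<close> \<open>0 \<le> r\<close> in simp)
qed

lemma C1_SE2_periodic:
  assumes "C1_SE2 f"
  shows "f (x, y, t + of_int m * (2 * pi)) = f (x, y, t)"
proof -
  interpret periodic_fun_simple "\<lambda>t. f (x, y, t)" "2 * pi"
    using assms by unfold_locales (simp add: C1_SE2_def)
  show ?thesis
    by (rule plus_of_int)
qed

lemma has_derivative_translation_invariant:
  assumes "\<And>q. f (q + v) = f q" and "(f has_derivative F) (at (p + v))"
  shows "(f has_derivative F) (at p)"
proof -
  have "((\<lambda>q. q + v) has_derivative id) (at p)"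
    by (simp add: id_def has_derivative_add_const)
  from diff_chain_at[OF this assms(2)] have "(f \<circ> (\<lambda>q. q + v) has_derivative F) (at p)"
    by simp
  moreover have "f \<circ> (\<lambda>q. q + v) = f"
    using assms(1) by auto
  ultimately show ?thesis
    by simp
qed

lemma has_derivative_outside_support:
  assumes "(f has_derivative F) (at p)" and "p \<notin> closure {q. f q \<noteq> 0}"
  shows "F = (\<lambda>_. 0)"
proof -
  have "(f has_derivative (\<lambda>_. 0)) (at p within UNIV)"
  proof (rule has_derivative_transform_within_open[OF has_derivative_const[of 0]])
    show "open (- closure {q. f q \<noteq> 0})" "p \<in> - closure {q. f q \<noteq> 0}"
      using assms(2) by auto
    show "0 = f q" if "q \<in> - closure {q. f q \<noteq> 0}" for q
      using that closure_subset[of "{q. f q \<noteq> 0}"] by auto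
  qed
  then show ?thesis
    using has_derivative_unique[OF assms(1)] by simp
qed

lemma C1_SE2_derivative_bounded:
  assumes C1: "C1_SE2 f" and supp: "supported_in_disc r f"
    and deriv: "\<And>p. (f has_derivative blinfun_apply (D p)) (at p)" and cont: "continuous_on UNIV D"
  obtains B where "\<And>p. norm (D p) \<le> B"
proof -
  define box where "box = cbox (-r, -r, 0) (r, r, 2 * pi)"
  have "bounded (D ` box)"
    unfolding box_def
    by (intro compact_imp_bounded compact_continuous_image continuous_on_subset[OF cont]) auto
  then obtain B where B: "\<And>p. p \<in> box \<Longrightarrow> norm (D p) \<le> B"
    unfolding bounded_iff by blast
  \<comment> \<open>\<open>D\<close> vanishes off the support and is \<open>2\<pi>\<close>-periodic in \<open>\<theta>\<close>, so all its values are taken on \<open>box\<close>.\<close>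
  have "norm (D p) \<le> max B 0" for p
  proof (cases "p \<in> closure {q. f q \<noteq> 0}")
    case False
    then have "blinfun_apply (D p) = blinfun_apply 0"
      using has_derivative_outside_support[OF deriv False] by (auto simp: fun_eq_iff)
    then show ?thesis
      by (simp add: blinfun_apply_inject)
  next
    case True
    obtain x y t where p: "p = (x, y, t)"
      by (cases p) auto
    have "\<bar>x\<bar> < r" "\<bar>y\<bar> < r"
      using supported_in_disc_closure_coords[OF supp] True unfolding p by auto
    define m where "m = \<lfloor>t / (2 * pi)\<rfloor>"
    define t' where "t' = t - of_int m * (2 * pi)"
    have "of_int m \<le> t / (2 * pi)" "t / (2 * pi) < of_int m + 1"
      unfolding m_def by linarith+
    then have "0 \<le> t'" "t' \<le> 2 * pi"
      unfolding t'_def by (simp_all add: field_simps)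
    have "(f has_derivative blinfun_apply (D p)) (at (x, y, t'))"
    proof (rule has_derivative_translation_invariant)
      show "f (q + (0, 0, of_int m * (2 * pi))) = f q" for q
        using C1_SE2_periodic[OF C1] by (cases q) simp
      show "(f has_derivative blinfun_apply (D p)) (at ((x, y, t') + (0, 0, of_int m * (2 * pi))))"
        using deriv[of p] by (simp add: p t'_def)
    qed
    then have "blinfun_apply (D (x, y, t')) = blinfun_apply (D p)"
      by (rule has_derivative_unique[OF deriv])
    moreover have "(x, y, t') \<in> box"
      using \<open>\<bar>x\<bar> < r\<close> \<open>\<bar>y\<bar> < r\<close> \<open>0 \<le> t'\<close> \<open>t' \<le> 2 * pi\<close>
      by (auto simp: box_def cbox_Pair_eq)
    ultimately show ?thesis
      using B by (fastforce simp: blinfun_apply_inject)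
  qed
  then show thesis
    by (rule that)
qed

lemma C1_SE2_supported_lipschitz:
  assumes C1: "C1_SE2 f" and supp: "supported_in_disc r f"
  obtains B where "B-lipschitz_on UNIV f"
proof -
  obtain D :: "real \<times> real \<times> real \<Rightarrow> (real \<times> real \<times> real) \<Rightarrow>\<^sub>L real"
    where deriv: "\<And>p. (f has_derivative blinfun_apply (D p)) (at p)" and cont: "continuous_on UNIV D"
    using C1 unfolding C1_SE2_def by blast
  obtain B where B: "\<And>p. norm (D p) \<le> B"
    using C1_SE2_derivative_bounded[OF C1 supp deriv cont] by blast
  then have "norm (f p - f q) \<le> B * norm (p - q)" for p q
    using deriv by (intro differentiable_bound[OF convex_UNIV])
      (auto simp: norm_blinfun.rep_eq intro: has_derivative_at_withinI)
  then have "B-lipschitz_on UNIV f"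
    using B[of 0] by (intro lipschitz_onI) (auto simp: dist_norm intro: order_trans[OF norm_ge_zero])
  then show thesis
    by (rule that)
qed

section \<open>The convolution as a Riemann sum\<close>

lemma se2_conv_radial:
  assumes "radial_in_translations \<rho>"
  shows "se2_conv f \<rho> p = 1 / (2 * pi) * integral (UNIV \<times> UNIV \<times> {0..2 * pi}) (\<lambda>q. f q * \<rho> (p - q))"
proof -
  obtain a b s where p: "p = (a, b, s)"
    by (cases p) auto
  have "\<rho> (cos t * (a - x) + sin t * (b - y), - sin t * (a - x) + cos t * (b - y), s - t)
      = \<rho> (a - x, b - y, s - t)" for x y t
    using assms[unfolded radial_in_translations_def, rule_format, of "- t" "a - x" "b - y" "s - t"]
    by simp
  then show ?thesis
    unfolding se2_conv_def p by (simp add: case_prod_beta' minus_prod_def)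
qed

definition grid_point :: "nat \<Rightarrow> nat \<Rightarrow> nat \<Rightarrow> nat \<Rightarrow> nat \<Rightarrow> nat \<Rightarrow> real \<times> real \<times> real" where
  "grid_point L1 L2 L3 i j l =
     (- 1 / 2 + real i / real L1, - 1 / 2 + real j / real L2, 2 * pi * real l / real L3)"

definition grid_conv :: "nat \<Rightarrow> nat \<Rightarrow> nat \<Rightarrow> se2fun \<Rightarrow> se2fun \<Rightarrow> se2fun" where
  "grid_conv L1 L2 L3 f \<rho> p = 1 / real (L1 * L2 * L3) *
     (\<Sum>i<L1. \<Sum>j<L2. \<Sum>l<L3. f (grid_point L1 L2 L3 i j l) * \<rho> (p - grid_point L1 L2 L3 i j l))"

lemma se2_conv_eq_integral_box:
  assumes rad: "radial_in_translations \<rho>" and supp: "supported_in_disc (1 / 2) f"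
    and cont: "continuous_on UNIV (\<lambda>q. f q * \<rho> (p - q))"
  shows "se2_conv f \<rho> p
    = 1 / (2 * pi) * integral (cbox (- 1 / 2, - 1 / 2, 0) (1 / 2, 1 / 2, 2 * pi)) (\<lambda>q. f q * \<rho> (p - q))"
proof -
  define box :: "(real \<times> real \<times> real) set" where "box = cbox (- 1 / 2, - 1 / 2, 0) (1 / 2, 1 / 2, 2 * pi)"
  define g where "g q = f q * \<rho> (p - q)" for q
  have sub: "box \<subseteq> UNIV \<times> UNIV \<times> {0..2 * pi}"
    by (auto simp: box_def cbox_Pair_eq)
  have "(g has_integral integral box g) box"
    unfolding box_def g_def by (intro integrable_integral integrable_continuous continuous_on_subset[OF cont]) simp
  then have "((\<lambda>q. if q \<in> box then g q else 0) has_integral integral box g) (UNIV \<times> UNIV \<times> {0..2 * pi})"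
    using has_integral_restrict[OF sub] by blast
  then have "(g has_integral integral box g) (UNIV \<times> UNIV \<times> {0..2 * pi})"
  proof (rule has_integral_eq[rotated])
    fix q :: "real \<times> real \<times> real"
    assume "q \<in> UNIV \<times> UNIV \<times> {0..2 * pi}"
    moreover obtain x y t where q: "q = (x, y, t)"
      by (cases q) auto
    ultimately have "f q = 0" if "q \<notin> box"
      using that supported_in_disc_coords[OF supp, of x y t] by (force simp: box_def cbox_Pair_eq)
    then show "(if q \<in> box then g q else 0) = g q"
      by (simp add: g_def)
  qed
  then show ?thesis
    unfolding se2_conv_radial[OF rad] box_def g_def by (simp add: integral_unique)
qed

lemma se2_conv_grid_conv_error:
  assumes lip_f: "\<Lambda>-lipschitz_on UNIV f" and lip_\<rho>: "\<Lambda>-lipschitz_on UNIV \<rho>"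
    and bound_f: "\<And>q. \<bar>f q\<bar> \<le> M" and bound_\<rho>: "\<And>q. \<bar>\<rho> q\<bar> \<le> M"
    and supp: "supported_in_disc (1 / 2) f" and rad: "radial_in_translations \<rho>"
    and L: "L1 > 0" "L2 > 0" "L3 > 0"
  shows "\<bar>se2_conv f \<rho> p - grid_conv L1 L2 L3 f \<rho> p\<bar>
    \<le> 2 * M * \<Lambda> * (1 / real L1 + 1 / real L2 + 2 * pi / real L3)"
proof -
  define g where "g q = f q * \<rho> (p - q)" for q
  have "M \<ge> 0"
    using bound_f[of 0] by linarith
  have "\<Lambda>-lipschitz_on UNIV (\<lambda>q. \<rho> (p - q))"
  proof (rule lipschitz_onI)
    fix q q'
    show "dist (\<rho> (p - q)) (\<rho> (p - q')) \<le> \<Lambda> * dist q q'"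
      using lipschitz_onD[OF lip_\<rho>, of "p - q" "p - q'"] by (simp add: dist_norm norm_minus_commute)
  qed (rule lipschitz_on_nonneg[OF lip_\<rho>])
  from lipschitz_on_mult_bounded[OF lip_f this bound_f bound_\<rho> \<open>M \<ge> 0\<close> \<open>M \<ge> 0\<close>]
  have lip_g: "(2 * M * \<Lambda>)-lipschitz_on UNIV g"
    unfolding g_def by (simp add: algebra_simps)
  define I where "I = integral (cbox (- 1 / 2, - 1 / 2, 0) (1 / 2, 1 / 2, 2 * pi)) g"
  define S where "S = (\<Sum>i<L1. \<Sum>j<L2. \<Sum>l<L3. g (grid_point L1 L2 L3 i j l))"
  have riemann: "\<bar>I - 1 / real L1 * (1 / real L2) * (2 * pi / real L3) * S\<bar>
      \<le> 2 * pi * (2 * M * \<Lambda>) * (1 / real L1 + 1 / real L2 + 2 * pi / real L3)"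
    using riemann_sum3_lipschitz_error[OF lip_g, of "1 / real L1" "1 / real L2" "2 * pi / real L3"
        "- 1 / 2" "- 1 / 2" 0 L1 L2 L3] L
    by (simp add: I_def S_def grid_point_def mult.commute[of _ "2 * pi"])
  have "se2_conv f \<rho> p = 1 / (2 * pi) * I"
    unfolding I_def g_def
    by (rule se2_conv_eq_integral_box[OF rad supp lipschitz_on_continuous_on[OF lip_g[unfolded g_def]]])
  moreover have "grid_conv L1 L2 L3 f \<rho> p = 1 / (2 * pi) * (1 / real L1 * (1 / real L2) * (2 * pi / real L3) * S)"
    unfolding grid_conv_def S_def g_def by simp
  ultimately have "se2_conv f \<rho> p - grid_conv L1 L2 L3 f \<rho> p
      = 1 / (2 * pi) * (I - 1 / real L1 * (1 / real L2) * (2 * pi / real L3) * S)"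
    by (simp only: right_diff_distrib)
  then have "\<bar>se2_conv f \<rho> p - grid_conv L1 L2 L3 f \<rho> p\<bar>
      = 1 / (2 * pi) * \<bar>I - 1 / real L1 * (1 / real L2) * (2 * pi / real L3) * S\<bar>"
    by (simp add: abs_mult)
  also have "\<dots> \<le> 1 / (2 * pi) * (2 * pi * (2 * M * \<Lambda>) * (1 / real L1 + 1 / real L2 + 2 * pi / real L3))"
    using riemann by (intro mult_left_mono) auto
  also have "\<dots> = 2 * M * \<Lambda> * (1 / real L1 + 1 / real L2 + 2 * pi / real L3)"
    by simp
  finally show ?thesis .
qed

section \<open>Characters and discrete Fourier coefficients\<close>

definition se2_char :: "int \<Rightarrow> int \<Rightarrow> int \<Rightarrow> real \<times> real \<times> real \<Rightarrow> complex" where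
  "se2_char k1 k2 k3 = (\<lambda>(x, y, t). cis (- (2 * pi * (of_int k1 * x + of_int k2 * y) + of_int k3 * t)))"

lemma cnj_phi_k: "cnj (phi_k k1 k2 k3 x y t) = se2_char k1 k2 k3 (x, y, t)"
  unfolding phi_k_def se2_char_def cis_conv_exp
  by (simp add: exp_add[symmetric] exp_cnj algebra_simps)

lemma se2_char_add: "se2_char k1 k2 k3 (p + q) = se2_char k1 k2 k3 p * se2_char k1 k2 k3 q"
  by (cases p, cases q) (simp add: se2_char_def cis_mult algebra_simps)

lemma norm_se2_char [simp]: "norm (se2_char k1 k2 k3 p) = 1"
  by (cases p) (simp add: se2_char_def)

lemma se2_char_periodic: "se2_char k1 k2 k3 (x, y, t + 2 * pi) = se2_char k1 k2 k3 (x, y, t)"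
proof -
  have "se2_char k1 k2 k3 (x, y, t + 2 * pi) = se2_char k1 k2 k3 (x, y, t) * se2_char k1 k2 k3 (0, 0, 2 * pi)"
    using se2_char_add[of k1 k2 k3 "(x, y, t)" "(0, 0, 2 * pi)"] by simp
  moreover have "se2_char k1 k2 k3 (0, 0, 2 * pi) = 1"
    unfolding se2_char_def using cis_multiple_2pi[of "real_of_int (- k3)"] by (simp add: mult_ac)
  ultimately show ?thesis
    by simp
qed

lemma dft_coeff_grid:
  "dft_coeff g k1 k2 k3 L1 L2 L3 = 1 / of_nat (L1 * L2 * L3) *
     (\<Sum>i<L1. \<Sum>j<L2. \<Sum>l<L3. of_real (g (grid_point L1 L2 L3 i j l)) * se2_char k1 k2 k3 (grid_point L1 L2 L3 i j l))"
  unfolding dft_coeff_def grid_point_def Let_def cnj_phi_k ..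

lemma norm_sum3_le:
  fixes F :: "'a \<Rightarrow> 'b \<Rightarrow> 'c \<Rightarrow> 'd::real_normed_vector"
  assumes "\<And>a b c. a \<in> A \<Longrightarrow> b \<in> B \<Longrightarrow> c \<in> C \<Longrightarrow> norm (F a b c) \<le> e"
  shows "norm (\<Sum>a\<in>A. \<Sum>b\<in>B. \<Sum>c\<in>C. F a b c) \<le> real (card A) * (real (card B) * (real (card C) * e))"
proof -
  have "norm (\<Sum>c\<in>C. F a b c) \<le> real (card C) * e" if "a \<in> A" "b \<in> B" for a b
    using sum_norm_le[of C "F a b" "\<lambda>_. e"] assms that by simp
  then have "norm (\<Sum>b\<in>B. \<Sum>c\<in>C. F a b c) \<le> real (card B) * (real (card C) * e)" if "a \<in> A" for a
    using sum_norm_le[of B "\<lambda>b. \<Sum>c\<in>C. F a b c" "\<lambda>_. real (card C) * e"] that by simp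
  then show ?thesis
    using sum_norm_le[of A "\<lambda>a. \<Sum>b\<in>B. \<Sum>c\<in>C. F a b c" "\<lambda>_. real (card B) * (real (card C) * e)"]
    by simp
qed

lemma dft_coeff_diff:
  "dft_coeff (\<lambda>p. g p - h p) k1 k2 k3 L1 L2 L3 = dft_coeff g k1 k2 k3 L1 L2 L3 - dft_coeff h k1 k2 k3 L1 L2 L3"
  unfolding dft_coeff_grid by (simp add: left_diff_distrib sum_subtractf right_diff_distrib)

lemma norm_dft_coeff_le:
  assumes "\<And>p. \<bar>g p\<bar> \<le> M"
  shows "norm (dft_coeff g k1 k2 k3 L1 L2 L3) \<le> M"
proof -
  have "M \<ge> 0"
    using assms[of 0] by linarith
  have "norm (\<Sum>i<L1. \<Sum>j<L2. \<Sum>l<L3. of_real (g (grid_point L1 L2 L3 i j l)) * se2_char k1 k2 k3 (grid_point L1 L2 L3 i j l))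
      \<le> real L1 * (real L2 * (real L3 * M))"
    using norm_sum3_le[of "{..<L1}" "{..<L2}" "{..<L3}" "\<lambda>i j l. of_real (g (grid_point L1 L2 L3 i j l))
        * se2_char k1 k2 k3 (grid_point L1 L2 L3 i j l)" M] assms
    by (simp add: norm_mult)
  then have "norm (dft_coeff g k1 k2 k3 L1 L2 L3) \<le> 1 / real (L1 * L2 * L3) * (real (L1 * L2 * L3) * M)"
    unfolding dft_coeff_grid norm_mult norm_divide norm_one norm_of_nat
    by (intro mult_left_mono) (simp_all add: mult_ac)
  also have "\<dots> \<le> M"
    using \<open>M \<ge> 0\<close> by (cases "L1 * L2 * L3 = 0") simp_all
  finally show ?thesis .
qed

lemma norm_cis_minus_one: "cmod (cis \<theta> - 1) = 2 * \<bar>sin (\<theta> / 2)\<bar>"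
proof -
  have cos: "cos \<theta> = 1 - 2 * (sin (\<theta> / 2))\<^sup>2" and sin: "sin \<theta> = 2 * sin (\<theta> / 2) * cos (\<theta> / 2)"
    using cos_double_sin[of "\<theta> / 2"] sin_double[of "\<theta> / 2"] by simp_all
  have "(cos \<theta> - 1)\<^sup>2 + (sin \<theta>)\<^sup>2 = 4 * (sin (\<theta> / 2))\<^sup>2 * ((sin (\<theta> / 2))\<^sup>2 + (cos (\<theta> / 2))\<^sup>2)"
    unfolding cos sin by algebra
  then have "(cos \<theta> - 1)\<^sup>2 + (sin \<theta>)\<^sup>2 = (2 * sin (\<theta> / 2))\<^sup>2"
    by (simp add: power_mult_distrib)
  then have "cmod (cis \<theta> - 1) = sqrt ((2 * sin (\<theta> / 2))\<^sup>2)"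
    by (simp add: cmod_def)
  then show ?thesis
    by (simp only: real_sqrt_abs abs_mult)
qed

lemma norm_cis_minus_one_le: "cmod (cis \<theta> - 1) \<le> \<bar>\<theta>\<bar>"
  unfolding norm_cis_minus_one using abs_sin_x_le_abs_x[of "\<theta> / 2"] by simp

lemma abs_sin_ge_half:
  fixes x :: real
  assumes "\<bar>x\<bar> \<le> pi / 2"
  shows "\<bar>x\<bar> / 2 \<le> \<bar>sin x\<bar>"
proof -
  have "\<bar>sin x - (\<Sum>m<3. sin_coeff m * x ^ m)\<bar> \<le> inverse (fact 3) * \<bar>x\<bar> ^ 3"
    by (rule Maclaurin_sin_bound)
  moreover have "(\<Sum>m<3. sin_coeff m * x ^ m) = x"
    by (simp add: numeral_3_eq_3 sin_coeff_def)
  ultimately have taylor: "\<bar>sin x - x\<bar> \<le> \<bar>x\<bar> * (\<bar>x\<bar>\<^sup>2 / 6)"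
    by (simp add: fact_numeral power2_eq_square power3_eq_cube)
  have "pi \<le> 16 / 5"
    using pi_approx(2) by simp
  then have "\<bar>x\<bar> \<le> 8 / 5"
    using assms by linarith
  then have "\<bar>x\<bar>\<^sup>2 / 6 \<le> 1 / 2"
    using power_mono[of "\<bar>x\<bar>" "8 / 5" 2] by (simp add: power2_eq_square)
  then have "\<bar>x\<bar> * (\<bar>x\<bar>\<^sup>2 / 6) \<le> \<bar>x\<bar> / 2"
    using mult_left_mono[of "\<bar>x\<bar>\<^sup>2 / 6" "1 / 2" "\<bar>x\<bar>"] by simp
  with taylor show ?thesis
    by linarith
qed

lemma norm_cis_minus_one_ge:
  assumes "\<bar>\<theta>\<bar> \<le> pi"
  shows "\<bar>\<theta>\<bar> / 2 \<le> cmod (cis \<theta> - 1)"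
  unfolding norm_cis_minus_one using abs_sin_ge_half[of "\<theta> / 2"] assms by simp

lemma sum_lessThan_int_shift:
  "(\<Sum>i<n. w (int i - c)) = (\<Sum>m\<in>{-c..<int n - c}. w m)"
  by (rule sum.reindex_bij_witness[where i = "\<lambda>m. nat (m + c)" and j = "\<lambda>i. int i - c"]) auto

lemma sum_lessThan_int_window:
  assumes "\<And>m. w m \<noteq> 0 \<Longrightarrow> - c \<le> m \<and> m < int n - c \<and> m \<in> A" and "finite A"
  shows "(\<Sum>i<n. w (int i - c)) = sum w A"
  unfolding sum_lessThan_int_shift using assms by (intro sum.mono_neutral_cong) auto

lemma sum_lessThan_centred:
  "(\<Sum>i<2 * K + 1. v (int i - int K)) = (\<Sum>m\<in>{- int K..int K}. v m)"
proof -
  have "{- int K..<int (2 * K + 1) - int K} = {- int K..int K}"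
    by auto
  then show ?thesis
    by (simp only: sum_lessThan_int_shift)
qed

lemma sum_centred_window:
  fixes w :: "int \<Rightarrow> 'a::comm_monoid_add"
  assumes "int (2 * K + 1) < 4 * int a" "4 * int a < 3 * int (2 * K + 1)"
    and "\<And>m. w m \<noteq> 0 \<Longrightarrow> 4 * \<bar>m\<bar> < int (2 * K + 1)"
  shows "(\<Sum>i<2 * K + 1. w (int i - int a)) = (\<Sum>m\<in>{- int K..int K}. w m)"
proof (rule sum_lessThan_int_window)
  fix m assume "w m \<noteq> 0"
  then have "4 * \<bar>m\<bar> < int (2 * K + 1)"
    by (rule assms(3))
  with assms(1,2) show "- int a \<le> m \<and> m < int (2 * K + 1) - int a \<and> m \<in> {- int K..int K}"
    by (cases "m \<ge> 0") auto
qed simp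

lemma sum_int_interval_shift:
  fixes K :: int
  assumes "\<And>m. w m \<noteq> 0 \<Longrightarrow> \<bar>m\<bar> < K"
  shows "(\<Sum>m\<in>{-K..K}. w (m + 1)) = (\<Sum>m\<in>{-K..K}. w m)"
proof -
  have "(\<Sum>m\<in>{-K..K}. w (m + 1)) = (\<Sum>m\<in>{-K + 1..K + 1}. w m)"
    by (rule sum.reindex_bij_witness[where i = "\<lambda>m. m - 1" and j = "\<lambda>m. m + 1"]) auto
  also have "\<dots> = (\<Sum>m\<in>{-K..K}. w m)"
    using assms by (intro sum.mono_neutral_cong) force+
  finally show ?thesis .
qed

lemma sum_lessThan_periodic_shift:
  assumes "\<And>m. u (m + int n) = u m"
  shows "(\<Sum>l<n. u (int l - c)) = (\<Sum>l<n. u (int l))"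
proof (cases "n = 0")
  case False
  interpret periodic_fun_simple u "int n"
    using assms by unfold_locales
  have mod_eq: "u (m mod int n) = u m" for m
    using plus_of_int[of "m mod int n" "m div int n"] by (simp add: mult.commute)
  show ?thesis
  proof (rule sum.reindex_bij_witness[where i = "\<lambda>l. nat ((int l + c) mod int n)"
        and j = "\<lambda>l. nat ((int l - c) mod int n)"])
    fix l assume "l \<in> {..<n}"
    then show "nat ((int (nat ((int l - c) mod int n)) + c) mod int n) = l"
      using False by (simp add: mod_add_left_eq)
    show "nat ((int l - c) mod int n) \<in> {..<n}"
      using False by (simp add: nat_less_iff)
    show "u (int (nat ((int l - c) mod int n))) = u (int l - c)"
      using False by (simp add: mod_eq)
  next
    fix l assume "l \<in> {..<n}"
    then show "nat ((int (nat ((int l + c) mod int n)) - c) mod int n) = l"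
      using False by (simp add: mod_diff_left_eq)
    show "nat ((int l + c) mod int n) \<in> {..<n}"
      using False by (simp add: nat_less_iff)
  qed
qed simp

lemma sum_lessThan_cartesian3:
  "(\<Sum>i<n1. \<Sum>j<n2. \<Sum>l<n3. F i j l) = (\<Sum>(i, j, l)\<in>{..<n1} \<times> {..<n2} \<times> {..<n3}. F i j l)"
  by (simp add: sum.cartesian_product)

section \<open>The discrete convolution theorem on the grid\<close>

locale se2_grid =
  fixes K1 K2 K3 :: nat and k1 k2 k3 :: int
begin

abbreviation L1 :: nat where "L1 \<equiv> 2 * K1 + 1"
abbreviation L2 :: nat where "L2 \<equiv> 2 * K2 + 1"
abbreviation L3 :: nat where "L3 \<equiv> 2 * K3 + 1"
abbreviation node :: "nat \<Rightarrow> nat \<Rightarrow> nat \<Rightarrow> real \<times> real \<times> real" where "node \<equiv> grid_point L1 L2 L3"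
abbreviation chi :: "real \<times> real \<times> real \<Rightarrow> complex" where "chi \<equiv> se2_char k1 k2 k3"
abbreviation dft :: "se2fun \<Rightarrow> complex" where "dft g \<equiv> dft_coeff g k1 k2 k3 L1 L2 L3"

definition lattice_point :: "int \<Rightarrow> int \<Rightarrow> int \<Rightarrow> real \<times> real \<times> real" where
  "lattice_point m1 m2 m3 = (of_int m1 / real L1, of_int m2 / real L2, 2 * pi * of_int m3 / real L3)"

definition lattice_sum :: "se2fun \<Rightarrow> real \<times> real \<times> real \<Rightarrow> complex" where
  "lattice_sum \<rho> s = (\<Sum>m1\<in>{- int K1..int K1}. \<Sum>m2\<in>{- int K2..int K2}. \<Sum>l<L3.
     of_real (\<rho> (lattice_point m1 m2 (int l) + s)) * chi (lattice_point m1 m2 (int l) + s))"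

lemma node_diff: "node i j l - node a b c = lattice_point (int i - int a) (int j - int b) (int l - int c)"
  by (simp add: grid_point_def lattice_point_def diff_divide_distrib right_diff_distrib)

lemma node_centred:
  "node i j l = lattice_point (int i - int K1) (int j - int K2) (int l) + (- 1 / (2 * real L1), - 1 / (2 * real L2), 0)"
proof -
  have "- 1 / 2 + real i / real (2 * K + 1) = of_int (int i - int K) / real (2 * K + 1) + - 1 / (2 * real (2 * K + 1))"
    for i K :: nat
    by (simp add: divide_simps) (simp add: algebra_simps)
  then show ?thesis
    by (simp add: grid_point_def lattice_point_def)
qed

lemma lattice_point_support:
  assumes "supported_in_disc (1 / 4) \<rho>" and "\<rho> (lattice_point m1 m2 m3) \<noteq> 0"
  shows "4 * \<bar>m1\<bar> < int L1" and "4 * \<bar>m2\<bar> < int L2"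
proof -
  have "\<bar>of_int m1 / real L1\<bar> < 1 / 4" "\<bar>of_int m2 / real L2\<bar> < 1 / 4"
    using supported_in_disc_coords[OF assms(1)] assms(2) unfolding lattice_point_def by blast+
  then have "4 * \<bar>of_int m1\<bar> < real L1" "4 * \<bar>of_int m2\<bar> < real L2"
    by (simp_all add: field_simps)
  then show "4 * \<bar>m1\<bar> < int L1" "4 * \<bar>m2\<bar> < int L2"
    by linarith+
qed

lemma node_support:
  assumes "supported_in_disc (1 / 4) f" and "f (node a b c) \<noteq> 0"
  shows "int L1 < 4 * int a" "4 * int a < 3 * int L1" "int L2 < 4 * int b" "4 * int b < 3 * int L2"
proof -
  have centre: "int (2 * K + 1) < 4 * int a \<and> 4 * int a < 3 * int (2 * K + 1)"
    if "\<bar>- 1 / 2 + real a / real (2 * K + 1)\<bar> < 1 / 4" for a K :: nat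
  proof -
    have "- (1 / 4) < - 1 / 2 + real a / real (2 * K + 1) \<and> - 1 / 2 + real a / real (2 * K + 1) < 1 / 4"
      using that unfolding abs_less_iff by linarith
    then have "real (2 * K + 1) < 4 * real a" "4 * real a < 3 * real (2 * K + 1)"
      by (simp_all add: field_simps)
    then show ?thesis
      by linarith
  qed
  have "\<bar>- 1 / 2 + real a / real L1\<bar> < 1 / 4" "\<bar>- 1 / 2 + real b / real L2\<bar> < 1 / 4"
    using supported_in_disc_coords[OF assms(1)] assms(2) unfolding grid_point_def by blast+
  then show "int L1 < 4 * int a" "4 * int a < 3 * int L1" "int L2 < 4 * int b" "4 * int b < 3 * int L2"
    using centre by blast+
qed

lemma node_sum_eq_lattice_sum:
  assumes supp_f: "supported_in_disc (1 / 4) f" and "f (node a b c) \<noteq> 0"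
    and supp: "supported_in_disc (1 / 4) \<rho>" and per: "\<And>x y t. \<rho> (x, y, t + 2 * pi) = \<rho> (x, y, t)"
  shows "(\<Sum>i<L1. \<Sum>j<L2. \<Sum>l<L3. of_real (\<rho> (node i j l - node a b c)) * chi (node i j l - node a b c))
    = lattice_sum \<rho> 0"
proof -
  note a = node_support(1,2)[OF supp_f \<open>f (node a b c) \<noteq> 0\<close>]
  note b = node_support(3,4)[OF supp_f \<open>f (node a b c) \<noteq> 0\<close>]
  define \<psi> where "\<psi> m1 m2 m3 = of_real (\<rho> (lattice_point m1 m2 m3)) * chi (lattice_point m1 m2 m3)" for m1 m2 m3
  have periodic: "\<psi> m1 m2 (m3 + int L3) = \<psi> m1 m2 m3" for m1 m2 m3
  proof -
    have "real L3 > 0"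
      by simp
    then have "lattice_point m1 m2 (m3 + int L3) = (of_int m1 / real L1, of_int m2 / real L2, 2 * pi * of_int m3 / real L3 + 2 * pi)"
      by (simp add: lattice_point_def field_simps)
    then show ?thesis
      by (simp add: \<psi>_def per se2_char_periodic lattice_point_def)
  qed
  have shift: "(\<Sum>l<L3. \<psi> m1 m2 (int l - c)) = (\<Sum>l<L3. \<psi> m1 m2 (int l))" for m1 m2 c
    by (rule sum_lessThan_periodic_shift) (rule periodic)
  have support: "4 * \<bar>m1\<bar> < int L1 \<and> 4 * \<bar>m2\<bar> < int L2" if "\<psi> m1 m2 m3 \<noteq> 0" for m1 m2 m3
    using that lattice_point_support[OF supp] by (fastforce simp: \<psi>_def)
  have "(\<Sum>i<L1. \<Sum>j<L2. \<Sum>l<L3. of_real (\<rho> (node i j l - node a b c)) * chi (node i j l - node a b c))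
      = (\<Sum>i<L1. \<Sum>j<L2. \<Sum>l<L3. \<psi> (int i - int a) (int j - int b) (int l - int c))"
    by (simp only: \<psi>_def node_diff)
  also have "\<dots> = (\<Sum>i<L1. \<Sum>j<L2. \<Sum>l<L3. \<psi> (int i - int a) (int j - int b) (int l))"
    by (simp only: shift)
  also have "\<dots> = (\<Sum>i<L1. \<Sum>m2\<in>{- int K2..int K2}. \<Sum>l<L3. \<psi> (int i - int a) m2 (int l))"
  proof (intro sum.cong refl sum_centred_window[OF b])
    fix i m2 assume "(\<Sum>l<L3. \<psi> (int i - int a) m2 (int l)) \<noteq> 0"
    then show "4 * \<bar>m2\<bar> < int L2"
      using support by (meson sum.not_neutral_contains_not_neutral)
  qed
  also have "\<dots> = (\<Sum>m1\<in>{- int K1..int K1}. \<Sum>m2\<in>{- int K2..int K2}. \<Sum>l<L3. \<psi> m1 m2 (int l))"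
  proof (rule sum_centred_window[OF a])
    fix m1 assume "(\<Sum>m2\<in>{- int K2..int K2}. \<Sum>l<L3. \<psi> m1 m2 (int l)) \<noteq> 0"
    then show "4 * \<bar>m1\<bar> < int L1"
      using support by (meson sum.not_neutral_contains_not_neutral)
  qed
  also have "\<dots> = lattice_sum \<rho> 0"
    by (simp only: lattice_sum_def \<psi>_def add_0_right)
  finally show ?thesis .
qed

lemma dft_grid_conv:
  assumes supp_f: "supported_in_disc (1 / 4) f" and supp_\<rho>: "supported_in_disc (1 / 4) \<rho>"
    and per: "\<And>x y t. \<rho> (x, y, t + 2 * pi) = \<rho> (x, y, t)"
  shows "dft (grid_conv L1 L2 L3 f \<rho>) = dft f * (lattice_sum \<rho> 0 / of_nat (L1 * L2 * L3))"
proof -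
  define c :: complex where "c = 1 / of_nat (L1 * L2 * L3)"
  have "lattice_sum \<rho> 0 / of_nat (L1 * L2 * L3) = c * lattice_sum \<rho> 0"
    by (simp add: c_def)
  define G where "G = {..<L1} \<times> {..<L2} \<times> {..<L3}"
  define P :: "nat \<times> nat \<times> nat \<Rightarrow> real \<times> real \<times> real" where "P = (\<lambda>(i, j, l). node i j l)"
  have sum_G: "(\<Sum>i<L1. \<Sum>j<L2. \<Sum>l<L3. F (node i j l)) = (\<Sum>\<iota>\<in>G. F (P \<iota>))" for F :: "_ \<Rightarrow> complex"
    unfolding sum_lessThan_cartesian3 G_def P_def by (intro sum.cong refl) (simp add: split_def)
  have dft_G: "dft g = c * (\<Sum>\<iota>\<in>G. of_real (g (P \<iota>)) * chi (P \<iota>))" for g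
    unfolding dft_coeff_grid c_def sum_G[of "\<lambda>q. of_real (g q) * chi q"] ..
  have conv_G: "of_real (grid_conv L1 L2 L3 f \<rho> p) = c * (\<Sum>\<kappa>\<in>G. of_real (f (P \<kappa>)) * of_real (\<rho> (p - P \<kappa>)))"
    for p
    unfolding grid_conv_def c_def of_real_mult of_real_divide of_real_1 of_real_of_nat_eq of_real_sum
      sum_G[of "\<lambda>q. of_real (f q) * of_real (\<rho> (p - q))"] ..
  have inner: "(\<Sum>\<iota>\<in>G. of_real (\<rho> (P \<iota> - P \<kappa>)) * chi (P \<iota> - P \<kappa>)) = lattice_sum \<rho> 0"
    if "f (P \<kappa>) \<noteq> 0" for \<kappa>
  proof -
    obtain a b c where node: "P \<kappa> = node a b c"
      by (cases \<kappa>) (simp add: P_def)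
    have "(\<Sum>\<iota>\<in>G. of_real (\<rho> (P \<iota> - node a b c)) * chi (P \<iota> - node a b c)) = lattice_sum \<rho> 0"
      using that unfolding node sum_G[of "\<lambda>q. of_real (\<rho> (q - node a b c)) * chi (q - node a b c)", symmetric]
      by (rule node_sum_eq_lattice_sum[OF supp_f _ supp_\<rho> per])
    then show ?thesis
      unfolding node .
  qed
  have factor: "of_real (f (P \<kappa>)) * of_real (\<rho> (P \<iota> - P \<kappa>)) * chi (P \<iota>)
      = of_real (f (P \<kappa>)) * chi (P \<kappa>) * (of_real (\<rho> (P \<iota> - P \<kappa>)) * chi (P \<iota> - P \<kappa>))" for \<iota> \<kappa>
    using se2_char_add[of k1 k2 k3 "P \<kappa>" "P \<iota> - P \<kappa>"] by (simp add: mult_ac)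
  have "dft (grid_conv L1 L2 L3 f \<rho>)
      = c * (\<Sum>\<iota>\<in>G. c * (\<Sum>\<kappa>\<in>G. of_real (f (P \<kappa>)) * of_real (\<rho> (P \<iota> - P \<kappa>)) * chi (P \<iota>)))"
    unfolding dft_G conv_G by (simp add: sum_distrib_right mult.assoc)
  also have "\<dots> = c * c * (\<Sum>\<iota>\<in>G. \<Sum>\<kappa>\<in>G.
      of_real (f (P \<kappa>)) * chi (P \<kappa>) * (of_real (\<rho> (P \<iota> - P \<kappa>)) * chi (P \<iota> - P \<kappa>)))"
    unfolding factor by (simp only: sum_distrib_left mult.assoc)
  also have "\<dots> = c * c * (\<Sum>\<kappa>\<in>G. of_real (f (P \<kappa>)) * chi (P \<kappa>)
      * (\<Sum>\<iota>\<in>G. of_real (\<rho> (P \<iota> - P \<kappa>)) * chi (P \<iota> - P \<kappa>)))"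
    by (subst sum.swap) (simp only: sum_distrib_left)
  also have "\<dots> = c * c * (\<Sum>\<kappa>\<in>G. of_real (f (P \<kappa>)) * chi (P \<kappa>) * lattice_sum \<rho> 0)"
    using inner by (intro arg_cong[where f = "\<lambda>x. c * c * x"] sum.cong) auto
  also have "\<dots> = dft f * (lattice_sum \<rho> 0 / of_nat (L1 * L2 * L3))"
    unfolding dft_G \<open>lattice_sum \<rho> 0 / of_nat (L1 * L2 * L3) = c * lattice_sum \<rho> 0\<close>
    by (simp add: sum_distrib_left mult_ac)
  finally show ?thesis .
qed

lemma lattice_sum_unit_shifts:
  assumes K: "1 \<le> K1" "1 \<le> K2" and supp: "supported_in_disc (1 / 4) \<rho>"
  shows "lattice_sum \<rho> (1 / real L1, 0, 0) = lattice_sum \<rho> 0"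
    and "lattice_sum \<rho> (0, 1 / real L2, 0) = lattice_sum \<rho> 0"
proof -
  define \<psi> where "\<psi> m1 m2 m3 = of_real (\<rho> (lattice_point m1 m2 m3)) * chi (lattice_point m1 m2 m3)" for m1 m2 m3
  have support: "\<bar>m1\<bar> < int K1 \<and> \<bar>m2\<bar> < int K2" if "\<psi> m1 m2 m3 \<noteq> 0" for m1 m2 m3
  proof -
    have "\<rho> (lattice_point m1 m2 m3) \<noteq> 0"
      using that by (auto simp: \<psi>_def)
    from lattice_point_support[OF supp this] K show ?thesis
      by linarith
  qed
  have step: "lattice_point m1 m2 m3 + (1 / real L1, 0, 0) = lattice_point (m1 + 1) m2 m3"
    "lattice_point m1 m2 m3 + (0, 1 / real L2, 0) = lattice_point m1 (m2 + 1) m3" for m1 m2 m3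
    by (simp_all add: lattice_point_def add_divide_distrib)
  have shifted: "lattice_sum \<rho> (1 / real L1, 0, 0)
      = (\<Sum>m1\<in>{- int K1..int K1}. \<Sum>m2\<in>{- int K2..int K2}. \<Sum>l<L3. \<psi> (m1 + 1) m2 (int l))"
    "lattice_sum \<rho> (0, 1 / real L2, 0)
      = (\<Sum>m1\<in>{- int K1..int K1}. \<Sum>m2\<in>{- int K2..int K2}. \<Sum>l<L3. \<psi> m1 (m2 + 1) (int l))"
    by (simp_all only: lattice_sum_def \<psi>_def step)
  have unshifted: "lattice_sum \<rho> 0 = (\<Sum>m1\<in>{- int K1..int K1}. \<Sum>m2\<in>{- int K2..int K2}. \<Sum>l<L3. \<psi> m1 m2 (int l))"
    by (simp only: lattice_sum_def \<psi>_def add_0_right)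
  show "lattice_sum \<rho> (1 / real L1, 0, 0) = lattice_sum \<rho> 0"
    unfolding shifted unshifted
  proof (rule sum_int_interval_shift)
    fix m1 assume "(\<Sum>m2\<in>{- int K2..int K2}. \<Sum>l<L3. \<psi> m1 m2 (int l)) \<noteq> 0"
    then show "\<bar>m1\<bar> < int K1"
      using support by (meson sum.not_neutral_contains_not_neutral)
  qed
  show "lattice_sum \<rho> (0, 1 / real L2, 0) = lattice_sum \<rho> 0"
    unfolding shifted unshifted
  proof (rule sum.cong[OF refl], rule sum_int_interval_shift)
    fix m1 m2 assume "(\<Sum>l<L3. \<psi> m1 m2 (int l)) \<noteq> 0"
    then show "\<bar>m2\<bar> < int K2"
      using support by (meson sum.not_neutral_contains_not_neutral)
  qed
qed

lemma lattice_sum_translate: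
  assumes lip: "\<Lambda>-lipschitz_on UNIV \<rho>"
  shows "cmod (lattice_sum \<rho> s - chi s * lattice_sum \<rho> 0) \<le> real (L1 * L2 * L3) * (\<Lambda> * norm s)"
proof -
  have cell: "cmod (of_real (\<rho> (q + s)) * chi (q + s) - chi s * (of_real (\<rho> (q + 0)) * chi (q + 0)))
      \<le> \<Lambda> * norm s" for q
  proof -
    have "of_real (\<rho> (q + s)) * chi (q + s) - chi s * (of_real (\<rho> (q + 0)) * chi (q + 0))
        = chi (q + s) * of_real (\<rho> (q + s) - \<rho> q)"
      by (simp add: se2_char_add algebra_simps)
    then show ?thesis
      using lipschitz_onD[OF lip, of "q + s" q] by (simp add: norm_mult dist_norm flip: of_real_diff)
  qed
  have "cmod (lattice_sum \<rho> s - chi s * lattice_sum \<rho> 0)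
      \<le> real (card {- int K1..int K1}) * (real (card {- int K2..int K2}) * (real (card {..<L3}) * (\<Lambda> * norm s)))"
    unfolding lattice_sum_def sum_distrib_left sum_subtractf[symmetric]
    by (rule norm_sum3_le) (rule cell)
  then show ?thesis
    by (simp add: algebra_simps)
qed

lemma lattice_sum_invariant_bound:
  assumes lip: "\<Lambda>-lipschitz_on UNIV \<rho>" and inv: "lattice_sum \<rho> s = lattice_sum \<rho> 0"
    and "chi s = cis \<theta>" and "\<bar>\<theta>\<bar> \<le> pi"
  shows "\<bar>\<theta>\<bar> * cmod (lattice_sum \<rho> 0) \<le> 2 * real (L1 * L2 * L3) * (\<Lambda> * norm s)"
proof -
  have "cmod (lattice_sum \<rho> 0) * cmod (cis \<theta> - 1) = cmod (lattice_sum \<rho> s - chi s * lattice_sum \<rho> 0)"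
    unfolding inv \<open>chi s = cis \<theta>\<close> by (simp add: norm_mult norm_minus_commute algebra_simps flip: norm_mult)
  also have "\<dots> \<le> real (L1 * L2 * L3) * (\<Lambda> * norm s)"
    by (rule lattice_sum_translate[OF lip])
  finally have "cmod (lattice_sum \<rho> 0) * cmod (cis \<theta> - 1) \<le> real (L1 * L2 * L3) * (\<Lambda> * norm s)" .
  moreover have "cmod (lattice_sum \<rho> 0) * (\<bar>\<theta>\<bar> / 2) \<le> cmod (lattice_sum \<rho> 0) * cmod (cis \<theta> - 1)"
    using norm_cis_minus_one_ge[OF \<open>\<bar>\<theta>\<bar> \<le> pi\<close>] by (rule mult_left_mono) simp
  moreover have "\<bar>\<theta>\<bar> * cmod (lattice_sum \<rho> 0) = 2 * (cmod (lattice_sum \<rho> 0) * (\<bar>\<theta>\<bar> / 2))"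
    by simp
  ultimately show ?thesis
    by linarith
qed

lemma lattice_sum_frequency_bounds:
  assumes K: "1 \<le> K1" "1 \<le> K2" and k: "\<bar>k1\<bar> \<le> int K1" "\<bar>k2\<bar> \<le> int K2"
    and supp: "supported_in_disc (1 / 4) \<rho>" and lip: "\<Lambda>-lipschitz_on UNIV \<rho>"
  shows "pi * \<bar>k1\<bar> * cmod (lattice_sum \<rho> 0) \<le> real (L1 * L2 * L3) * \<Lambda>"
    and "pi * \<bar>k2\<bar> * cmod (lattice_sum \<rho> 0) \<le> real (L1 * L2 * L3) * \<Lambda>"
proof -
  have bound: "pi * \<bar>k\<bar> * cmod (lattice_sum \<rho> 0) \<le> real (L1 * L2 * L3) * \<Lambda>"
    if "lattice_sum \<rho> s = lattice_sum \<rho> 0" "chi s = cis (- (2 * pi * of_int k / real L))"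
      "norm s = 1 / real L" "L = 2 * K + 1" "\<bar>k\<bar> \<le> int K" for s k L K
  proof -
    have "real L > 0" "2 * \<bar>of_int k\<bar> \<le> real L"
      using that(4,5) by linarith+
    then have "\<bar>- (2 * pi * of_int k / real L)\<bar> \<le> pi"
      by (simp add: abs_mult field_simps)
    from lattice_sum_invariant_bound[OF lip that(1,2) this]
    have "2 * pi * \<bar>of_int k\<bar> / real L * cmod (lattice_sum \<rho> 0) \<le> 2 * real (L1 * L2 * L3) * (\<Lambda> / real L)"
      by (simp add: that(3) abs_mult)
    then show ?thesis
      using \<open>real L > 0\<close> by (simp add: field_simps)
  qed
  show "pi * \<bar>k1\<bar> * cmod (lattice_sum \<rho> 0) \<le> real (L1 * L2 * L3) * \<Lambda>"
    by (rule bound[OF lattice_sum_unit_shifts(1)[OF K supp] _ _ refl k(1)])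
      (simp_all add: se2_char_def norm_Pair)
  show "pi * \<bar>k2\<bar> * cmod (lattice_sum \<rho> 0) \<le> real (L1 * L2 * L3) * \<Lambda>"
    by (rule bound[OF lattice_sum_unit_shifts(2)[OF K supp] _ _ refl k(2)])
      (simp_all add: se2_char_def norm_Pair)
qed

lemma dft_eq_lattice_sum:
  "dft \<rho> = lattice_sum \<rho> (- 1 / (2 * real L1), - 1 / (2 * real L2), 0) / of_nat (L1 * L2 * L3)"
proof -
  define s where "s = (- 1 / (2 * real L1), - 1 / (2 * real L2), 0 :: real)"
  define F where "F m1 m2 m3 = of_real (\<rho> (lattice_point m1 m2 m3 + s)) * chi (lattice_point m1 m2 m3 + s)"
    for m1 m2 m3
  have "dft \<rho> = 1 / of_nat (L1 * L2 * L3) * (\<Sum>i<L1. \<Sum>j<L2. \<Sum>l<L3. F (int i - int K1) (int j - int K2) (int l))"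
    by (simp only: dft_coeff_grid node_centred F_def s_def)
  also have "\<dots> = 1 / of_nat (L1 * L2 * L3) * (\<Sum>i<L1. \<Sum>m2\<in>{- int K2..int K2}. \<Sum>l<L3. F (int i - int K1) m2 (int l))"
    by (rule arg_cong[where f = "\<lambda>x. _ * x"], rule sum.cong[OF refl], rule sum_lessThan_centred)
  also have "\<dots> = 1 / of_nat (L1 * L2 * L3) * (\<Sum>m1\<in>{- int K1..int K1}. \<Sum>m2\<in>{- int K2..int K2}. \<Sum>l<L3. F m1 m2 (int l))"
    by (rule arg_cong[where f = "\<lambda>x. _ * x"], rule sum_lessThan_centred)
  also have "\<dots> = lattice_sum \<rho> s / of_nat (L1 * L2 * L3)"
    by (simp only: lattice_sum_def F_def) simp
  finally show ?thesis
    unfolding s_def .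
qed

lemma lattice_sum_shift_error:
  assumes lip: "\<Lambda>-lipschitz_on UNIV \<rho>" and "chi s = cis \<theta>"
  shows "cmod (lattice_sum \<rho> s - lattice_sum \<rho> 0)
    \<le> real (L1 * L2 * L3) * (\<Lambda> * norm s) + \<bar>\<theta>\<bar> * cmod (lattice_sum \<rho> 0)"
proof -
  have "cmod (lattice_sum \<rho> s - lattice_sum \<rho> 0)
      = cmod ((lattice_sum \<rho> s - chi s * lattice_sum \<rho> 0) + (chi s - 1) * lattice_sum \<rho> 0)"
    by (simp add: algebra_simps)
  also have "\<dots> \<le> cmod (lattice_sum \<rho> s - chi s * lattice_sum \<rho> 0) + cmod (chi s - 1) * cmod (lattice_sum \<rho> 0)"
    unfolding norm_mult[symmetric] by (rule norm_triangle_ineq)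
  also have "\<dots> \<le> real (L1 * L2 * L3) * (\<Lambda> * norm s) + \<bar>\<theta>\<bar> * cmod (lattice_sum \<rho> 0)"
    using lattice_sum_translate[OF lip, of s] norm_cis_minus_one_le[of \<theta>] \<open>chi s = cis \<theta>\<close>
    by (intro add_mono mult_right_mono) auto
  finally show ?thesis .
qed

lemma dft_lattice_sum_error:
  assumes K: "1 \<le> K1" "1 \<le> K2" and k: "\<bar>k1\<bar> \<le> int K1" "\<bar>k2\<bar> \<le> int K2"
    and supp: "supported_in_disc (1 / 4) \<rho>" and lip: "\<Lambda>-lipschitz_on UNIV \<rho>"
  shows "cmod (dft \<rho> - lattice_sum \<rho> 0 / of_nat (L1 * L2 * L3)) \<le> 3 / 2 * \<Lambda> * (1 / real L1 + 1 / real L2)"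
proof -
  define N where "N = real (L1 * L2 * L3)"
  define l1 where "l1 = real L1"
  define l2 where "l2 = real L2"
  define B where "B = cmod (lattice_sum \<rho> 0)"
  have pos: "N > 0" "l1 > 0" "l2 > 0" "\<Lambda> \<ge> 0" "B \<ge> 0"
    unfolding N_def l1_def l2_def B_def using lipschitz_on_nonneg[OF lip] by (simp_all only: of_nat_0_less_iff) simp_all
  define s where "s = (- 1 / (2 * l1), - 1 / (2 * l2), 0 :: real)"
  define \<theta> where "\<theta> = pi * of_int k1 / l1 + pi * of_int k2 / l2"
  have "chi s = cis (- (2 * pi * (of_int k1 * (- 1 / (2 * l1)) + of_int k2 * (- 1 / (2 * l2))) + of_int k3 * 0))"
    by (simp only: se2_char_def s_def prod.case)
  also have "\<dots> = cis \<theta>"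
    unfolding \<theta>_def using pos by (intro arg_cong[where f = cis]) (simp add: field_simps)
  finally have "chi s = cis \<theta>" .
  have "\<bar>\<theta>\<bar> * B \<le> (pi * \<bar>k1\<bar> / l1 + pi * \<bar>k2\<bar> / l2) * B"
    unfolding \<theta>_def using abs_triangle_ineq[of "pi * of_int k1 / l1" "pi * of_int k2 / l2"] pos
    by (intro mult_right_mono) (simp_all add: abs_mult)
  also have "\<dots> = (pi * \<bar>k1\<bar> * B) / l1 + (pi * \<bar>k2\<bar> * B) / l2"
    by (simp add: algebra_simps)
  also have "\<dots> \<le> N * \<Lambda> / l1 + N * \<Lambda> / l2"
    using lattice_sum_frequency_bounds[OF K k supp lip] pos unfolding N_def l1_def l2_def B_def
    by (intro add_mono divide_right_mono) auto
  finally have phase: "\<bar>\<theta>\<bar> * B \<le> N * \<Lambda> / l1 + N * \<Lambda> / l2" .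
  have "norm s \<le> 1 / (2 * l1) + 1 / (2 * l2)"
    unfolding s_def norm_Pair using sqrt_sum_squares_le_sum_abs[of "1 / (2 * l1)" "1 / (2 * l2)"] pos by simp
  then have "N * (\<Lambda> * norm s) \<le> N * (\<Lambda> * (1 / (2 * l1) + 1 / (2 * l2)))"
    using pos by (intro mult_left_mono) auto
  moreover have "cmod (lattice_sum \<rho> s - lattice_sum \<rho> 0) \<le> N * (\<Lambda> * norm s) + \<bar>\<theta>\<bar> * B"
    using lattice_sum_shift_error[OF lip \<open>chi s = cis \<theta>\<close>] unfolding N_def B_def .
  moreover have "N * (\<Lambda> * (1 / (2 * l1) + 1 / (2 * l2))) + (N * \<Lambda> / l1 + N * \<Lambda> / l2)
      = N * (3 / 2 * \<Lambda> * (1 / l1 + 1 / l2))"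
    by (simp add: ring_distribs)
  ultimately have bound: "cmod (lattice_sum \<rho> s - lattice_sum \<rho> 0) \<le> N * (3 / 2 * \<Lambda> * (1 / l1 + 1 / l2))"
    using phase by linarith
  have "dft \<rho> - lattice_sum \<rho> 0 / of_nat (L1 * L2 * L3) = (lattice_sum \<rho> s - lattice_sum \<rho> 0) / of_real N"
    unfolding dft_eq_lattice_sum s_def N_def l1_def l2_def by (simp add: diff_divide_distrib)
  then have "cmod (dft \<rho> - lattice_sum \<rho> 0 / of_nat (L1 * L2 * L3)) = cmod (lattice_sum \<rho> s - lattice_sum \<rho> 0) / N"
    using pos by (simp add: norm_divide)
  also have "\<dots> \<le> N * (3 / 2 * \<Lambda> * (1 / l1 + 1 / l2)) / N"
    using bound pos by (intro divide_right_mono) auto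
  also have "\<dots> = 3 / 2 * \<Lambda> * (1 / real L1 + 1 / real L2)"
    using pos unfolding l1_def l2_def by simp
  finally show ?thesis .
qed

lemma dft_se2_conv_error:
  assumes K: "1 \<le> K1" "1 \<le> K2" and k: "\<bar>k1\<bar> \<le> int K1" "\<bar>k2\<bar> \<le> int K2"
    and lip_f: "\<Lambda>-lipschitz_on UNIV f" and lip_\<rho>: "\<Lambda>-lipschitz_on UNIV \<rho>"
    and bound_f: "\<And>q. \<bar>f q\<bar> \<le> M" and bound_\<rho>: "\<And>q. \<bar>\<rho> q\<bar> \<le> M"
    and supp_f: "supported_in_disc (1 / 4) f" and supp_\<rho>: "supported_in_disc (1 / 4) \<rho>"
    and rad: "radial_in_translations \<rho>" and per: "\<And>x y t. \<rho> (x, y, t + 2 * pi) = \<rho> (x, y, t)"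
  shows "cmod (dft (se2_conv f \<rho>) - dft f * dft \<rho>)
    \<le> 2 * M * \<Lambda> * (1 / real L1 + 1 / real L2 + 2 * pi / real L3) + 3 / 2 * M * \<Lambda> * (1 / real L1 + 1 / real L2)"
proof -
  have "M \<ge> 0"
    using bound_f[of 0] by linarith
  have "supported_in_disc (1 / 2) f"
    using supp_f by (rule supported_in_disc_mono) simp
  then have riemann: "cmod (dft (se2_conv f \<rho>) - dft (grid_conv L1 L2 L3 f \<rho>))
      \<le> 2 * M * \<Lambda> * (1 / real L1 + 1 / real L2 + 2 * pi / real L3)"
    unfolding dft_coeff_diff[symmetric]
    by (intro norm_dft_coeff_le se2_conv_grid_conv_error[OF lip_f lip_\<rho> bound_f bound_\<rho> _ rad]) simp_all
  have "dft (se2_conv f \<rho>) - dft f * dft \<rho>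
      = (dft (se2_conv f \<rho>) - dft (grid_conv L1 L2 L3 f \<rho>)) + dft f * (lattice_sum \<rho> 0 / of_nat (L1 * L2 * L3) - dft \<rho>)"
    unfolding dft_grid_conv[OF supp_f supp_\<rho> per] by (simp add: algebra_simps)
  then have "cmod (dft (se2_conv f \<rho>) - dft f * dft \<rho>)
      \<le> cmod (dft (se2_conv f \<rho>) - dft (grid_conv L1 L2 L3 f \<rho>))
        + cmod (dft f * (lattice_sum \<rho> 0 / of_nat (L1 * L2 * L3) - dft \<rho>))"
    by (simp only: norm_triangle_ineq)
  also have "\<dots> = cmod (dft (se2_conv f \<rho>) - dft (grid_conv L1 L2 L3 f \<rho>))
        + cmod (dft f) * cmod (dft \<rho> - lattice_sum \<rho> 0 / of_nat (L1 * L2 * L3))"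
    by (simp only: norm_mult norm_minus_commute)
  also have "\<dots> \<le> 2 * M * \<Lambda> * (1 / real L1 + 1 / real L2 + 2 * pi / real L3) + M * (3 / 2 * \<Lambda> * (1 / real L1 + 1 / real L2))"
    using riemann norm_dft_coeff_le[OF bound_f] dft_lattice_sum_error[OF K k supp_\<rho> lip_\<rho>] \<open>M \<ge> 0\<close>
    by (intro add_mono mult_mono) auto
  finally show ?thesis
    by (simp add: mult_ac)
qed

lemma dft_se2_conv_error_min:
  assumes K: "1 \<le> K1" "1 \<le> K2" "1 \<le> K3" and k: "\<bar>k1\<bar> \<le> int K1" "\<bar>k2\<bar> \<le> int K2"
    and lip_f: "\<Lambda>-lipschitz_on UNIV f" and lip_\<rho>: "\<Lambda>-lipschitz_on UNIV \<rho>"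
    and bound_f: "\<And>q. \<bar>f q\<bar> \<le> M" and bound_\<rho>: "\<And>q. \<bar>\<rho> q\<bar> \<le> M"
    and supp_f: "supported_in_disc (1 / 4) f" and supp_\<rho>: "supported_in_disc (1 / 4) \<rho>"
    and rad: "radial_in_translations \<rho>" and per: "\<And>x y t. \<rho> (x, y, t + 2 * pi) = \<rho> (x, y, t)"
  shows "cmod (dft (se2_conv f \<rho>) - dft f * dft \<rho>) \<le> (7 + 4 * pi) * M * \<Lambda> / real (min K1 (min K2 K3))"
proof -
  define e where "e = 1 / real (min K1 (min K2 K3))"
  have "M * \<Lambda> \<ge> 0"
    using bound_f[of 0] lipschitz_on_nonneg[OF lip_f] by simp
  have "1 / real (2 * K + 1) \<le> e" if "min K1 (min K2 K3) \<le> K" for K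
    unfolding e_def using K that by (intro divide_left_mono) auto
  then have inv: "1 / real L1 \<le> e" "1 / real L2 \<le> e" "1 / real L3 \<le> e"
    by simp_all
  have "2 * M * \<Lambda> * (1 / real L1 + 1 / real L2 + 2 * pi * (1 / real L3)) + 3 / 2 * M * \<Lambda> * (1 / real L1 + 1 / real L2)
      \<le> 2 * M * \<Lambda> * (e + e + 2 * pi * e) + 3 / 2 * M * \<Lambda> * (e + e)"
    using inv \<open>M * \<Lambda> \<ge> 0\<close> by (intro add_mono mult_left_mono) auto
  also have "\<dots> = (7 + 4 * pi) * M * \<Lambda> * e"
    by (simp add: algebra_simps)
  also have "\<dots> = (7 + 4 * pi) * M * \<Lambda> / real (min K1 (min K2 K3))"
    by (simp add: e_def)
  finally show ?thesis
    using dft_se2_conv_error[OF K(1,2) k lip_f lip_\<rho> bound_f bound_\<rho> supp_f supp_\<rho> rad per] by simp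
qed

end

theorem mainTheorem7:
  fixes f \<rho> :: se2fun
  assumes "C1_SE2 f" and "C1_SE2 \<rho>"
    and "supported_in_disc (1/4) f" and "supported_in_disc (1/4) \<rho>"
    and "radial_in_translations \<rho>"
  shows "\<exists>C > 0. \<forall>(K1::nat) (K2::nat) (K3::nat) (k1::int) (k2::int) (k3::int).
           K1 \<ge> 1 \<longrightarrow> K2 \<ge> 1 \<longrightarrow> K3 \<ge> 1 \<longrightarrow>
           \<bar>k1\<bar> \<le> int K1 \<longrightarrow> \<bar>k2\<bar> \<le> int K2 \<longrightarrow> \<bar>k3\<bar> \<le> int K3 \<longrightarrow>
           cmod (dft_coeff (se2_conv f \<rho>) k1 k2 k3 (2*K1+1) (2*K2+1) (2*K3+1)
                 - dft_coeff f k1 k2 k3 (2*K1+1) (2*K2+1) (2*K3+1)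
                   * dft_coeff \<rho> k1 k2 k3 (2*K1+1) (2*K2+1) (2*K3+1))
             \<le> C / real (min K1 (min K2 K3))"
proof -
  obtain \<Lambda>f \<Lambda>\<rho> where "\<Lambda>f-lipschitz_on UNIV f" "\<Lambda>\<rho>-lipschitz_on UNIV \<rho>"
    using C1_SE2_supported_lipschitz[OF assms(1,3)] C1_SE2_supported_lipschitz[OF assms(2,4)] by metis
  then have lip: "(max \<Lambda>f \<Lambda>\<rho>)-lipschitz_on UNIV f" "(max \<Lambda>f \<Lambda>\<rho>)-lipschitz_on UNIV \<rho>"
    by (auto intro: lipschitz_on_mono)
  define \<Lambda> where "\<Lambda> = max \<Lambda>f \<Lambda>\<rho>"
  have bound: "\<bar>f q\<bar> \<le> \<Lambda> / 2" "\<bar>\<rho> q\<bar> \<le> \<Lambda> / 2" for q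
    using lipschitz_supported_in_disc_bound[OF lip(1) assms(3)] lipschitz_supported_in_disc_bound[OF lip(2) assms(4)]
    by (simp_all add: \<Lambda>_def)
  have per: "\<rho> (x, y, t + 2 * pi) = \<rho> (x, y, t)" for x y t
    using assms(2) unfolding C1_SE2_def by blast
  define C where "C = (7 + 4 * pi) * (\<Lambda> / 2) * \<Lambda> + 1"
  have "\<Lambda> \<ge> 0"
    using lipschitz_on_nonneg[OF lip(1)] by (simp add: \<Lambda>_def)
  show ?thesis
  proof (intro exI[of _ C] conjI allI impI)
    show "C > 0"
      unfolding C_def using \<open>\<Lambda> \<ge> 0\<close> pi_gt_zero by (intro add_nonneg_pos mult_nonneg_nonneg) auto
    fix K1 K2 K3 :: nat and k1 k2 k3 :: int
    assume "1 \<le> K1" "1 \<le> K2" "1 \<le> K3" "\<bar>k1\<bar> \<le> int K1" "\<bar>k2\<bar> \<le> int K2"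
    interpret se2_grid K1 K2 K3 k1 k2 k3 .
    have "cmod (dft (se2_conv f \<rho>) - dft f * dft \<rho>) \<le> (7 + 4 * pi) * (\<Lambda> / 2) * \<Lambda> / real (min K1 (min K2 K3))"
      using dft_se2_conv_error_min \<open>1 \<le> K1\<close> \<open>1 \<le> K2\<close> \<open>1 \<le> K3\<close> \<open>\<bar>k1\<bar> \<le> int K1\<close> \<open>\<bar>k2\<bar> \<le> int K2\<close>
        lip[folded \<Lambda>_def] bound assms(3,4,5) per .
    also have "\<dots> \<le> C / real (min K1 (min K2 K3))"
      unfolding C_def by (rule divide_right_mono) simp_all
    finally show "cmod (dft (se2_conv f \<rho>) - dft f * dft \<rho>) \<le> C / real (min K1 (min K2 K3))" .
  qed
qed

end
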